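(* Let $n\ge4$ and let $W_n$ be the wheel graph on $n$ vertices with oriented incidence matrix \[N=\left[\begin{array}{c|c} \mathbf{1}^T & \mathbf{0}^T \\ \hline -I_{n-1} & C \end{array}\right],\] where $C$ is the circulant matrix $\mathrm{circ}(1,0,\ldots,0,-1)$ of order $n-1$. Then $CC^T+I_{n-1}$ is invertible and the Moore–Penrose inverse of $N$ is \[N^+=\frac{1}{n} \left[\begin{array}{r|c} \mathbf{1} & X \\ \hline \mathbf{0} & Y \end{array}\right],\] where $X=(CC^T+I_{n-1})^{-1}(J_{n-1}-nI_{n-1})$ and $Y=-C^TX$.
   Context: The wheel graph $W_n$ ($n\ge4$) is a cycle on $n-1$ vertices together with a hub vertex adjacent to every cycle vertex. An oriented incidence matrix of a graph is obtained from the (0/1 vertex-edge) incidence matrix by changing one of the two $1$'s in each column to $-1$; the displayed block form corresponds to listing the hub first, then the cycle vertices in cyclic order, with the $n-1$ spokes (oriented away from the hub) listed first followed by the cycle edges. For $c_0,\dots,c_{k-1}$, $\mathrm{circ}(c_0,\ldots,c_{k-1})$ denotes the $k\times k$ circulant matrix whose $(i,j)$-entry is $c_{(j-i)\bmod k}$. $\mathbf 1$ is the all-ones column vector of length $n-1$, $\mathbf 0$ the zero vector, $J_{n-1}$ the $(n-1)\times(n-1)$ all-ones matrix, $I_{n-1}$ the identity. The Moore–Penrose inverse $A^+$ of a real matrix $A$ is the unique matrix with $AA^+A=A$, $A^+AA^+=A^+$, $(AA^+)^T=AA^+$, $(A^+A)^T=A^+A$. *)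

theory Defs
  imports "Jordan_Normal_Form.Gauss_Jordan_Elimination"
begin

definition circ_mat :: "nat \<Rightarrow> (nat \<Rightarrow> real) \<Rightarrow> real mat" where
  "circ_mat k c = mat k k (\<lambda>(i,j). c ((j + k - i) mod k))"

definition wheel_C :: "nat \<Rightarrow> real mat" where
  "wheel_C n = circ_mat (n - 1) (\<lambda>t. if t = 0 then 1 else if t = n - 2 then -1 else 0)"

definition wheel_N :: "nat \<Rightarrow> real mat" where
  "wheel_N n = four_block_mat
     (mat 1 (n - 1) (\<lambda>_. 1)) (0\<^sub>m 1 (n - 1))
     (- (1\<^sub>m (n - 1))) (wheel_C n)"

definition all_ones_mat :: "nat \<Rightarrow> nat \<Rightarrow> real mat" where
  "all_ones_mat r c = mat r c (\<lambda>_. 1)"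

definition is_moore_penrose_inverse :: "real mat \<Rightarrow> real mat \<Rightarrow> bool" where
  "is_moore_penrose_inverse A B \<longleftrightarrow>
     B \<in> carrier_mat (dim_col A) (dim_row A) \<and>
     A * B * A = A \<and> B * A * B = B \<and>
     transpose_mat (A * B) = A * B \<and> transpose_mat (B * A) = B * A"

end

theory Submission
  imports Defs "Jordan_Normal_Form.Determinant"
begin

(* Let P = (C C^T + I)^{-1} and let F be n times the claimed N^+. Since the columns of C sum
   to zero, 1^T P = 1^T and C^T J = 0, and one computes N F = n I - J and F N = n H with
   H = [P, -P C; -C^T P, C^T P C]. Both products are symmetric because P is, (n I - J) N = n N
   because the columns of N sum to zero, and H F = F is the identity P X - P C Y = X, which
   reduces to C C^T P = I - P. Thus F / n satisfies the Penrose equations. C C^T + I is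
   invertible because v^T (C C^T + I) v = |C^T v|^2 + |v|^2. *)

lemma transpose_smult_mat: "transpose_mat (k \<cdot>\<^sub>m A) = k \<cdot>\<^sub>m transpose_mat A"
  by (rule eq_matI) auto

lemma smult_inverse_smult_mat:
  fixes A :: "real mat"
  assumes "r \<noteq> 0"
  shows "(1 / r) \<cdot>\<^sub>m (r \<cdot>\<^sub>m A) = A"
  using assms by (intro eq_matI) auto

lemma eq_minus_mat_of_add_eq:
  fixes A B D :: "'a :: ab_group_add mat"
  assumes "A \<in> carrier_mat nr nc" "B \<in> carrier_mat nr nc" and "A + B = D"
  shows "A = D - B"
  using assms(1,2) unfolding assms(3)[symmetric] by (intro eq_matI) auto

lemma is_moore_penrose_inverse_smultI:
  fixes A B :: "real mat" and r :: real
  assumes B: "B \<in> carrier_mat (dim_col A) (dim_row A)" and r: "r \<noteq> 0"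
    and ABA: "A * B * A = r \<cdot>\<^sub>m A" and BAB: "B * A * B = r \<cdot>\<^sub>m B"
    and AB_sym: "transpose_mat (A * B) = A * B" and BA_sym: "transpose_mat (B * A) = B * A"
  shows "is_moore_penrose_inverse A ((1 / r) \<cdot>\<^sub>m B)"
proof -
  have A: "A \<in> carrier_mat (dim_row A) (dim_col A)" by simp
  have AB: "A * ((1 / r) \<cdot>\<^sub>m B) = (1 / r) \<cdot>\<^sub>m (A * B)"
    using A B by (rule mult_smult_distrib)
  have BA: "(1 / r) \<cdot>\<^sub>m B * A = (1 / r) \<cdot>\<^sub>m (B * A)"
    using B A by (rule mult_smult_assoc_mat)
  have "A * ((1 / r) \<cdot>\<^sub>m B) * A = (1 / r) \<cdot>\<^sub>m (A * B * A)"
    unfolding AB using A B by (intro mult_smult_assoc_mat) auto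
  moreover have "(1 / r) \<cdot>\<^sub>m B * A * ((1 / r) \<cdot>\<^sub>m B)
      = (1 / r) \<cdot>\<^sub>m ((1 / r) \<cdot>\<^sub>m (B * A * B))"
  proof -
    have BA_carrier: "B * A \<in> carrier_mat (dim_col A) (dim_col A)" using B by simp
    show ?thesis
      unfolding BA mult_smult_assoc_mat[OF BA_carrier smult_carrier_mat[OF B]]
      by (simp add: mult_smult_distrib[OF BA_carrier B])
  qed
  ultimately show ?thesis
    unfolding is_moore_penrose_inverse_def AB BA transpose_smult_mat AB_sym BA_sym ABA BAB
    using B r by (simp add: smult_inverse_smult_mat)
qed

lemma det_mult_transpose_add_one_neq_0:
  fixes C :: "real mat"
  assumes C: "C \<in> carrier_mat k k"
  shows "det (C * transpose_mat C + 1\<^sub>m k) \<noteq> 0"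
proof
  assume "det (C * transpose_mat C + 1\<^sub>m k) = 0"
  then obtain v where v: "v \<in> carrier_vec k" "v \<noteq> 0\<^sub>v k"
    and kernel: "(C * transpose_mat C + 1\<^sub>m k) *\<^sub>v v = 0\<^sub>v k"
    using C by (subst (asm) det_0_iff_vec_prod_zero) auto
  define x where "x = transpose_mat C *\<^sub>v v"
  have x: "x \<in> carrier_vec k" unfolding x_def using C v(1) by simp
  have "C *\<^sub>v x + v = 0\<^sub>v k"
    using kernel C v unfolding x_def
    by (simp add: add_mult_distrib_mat_vec[of _ k k] assoc_mult_mat_vec[of _ k k _ k])
  then have "v \<bullet> (C *\<^sub>v x + v) = 0" using v(1) by simp
  then have "v \<bullet> (C *\<^sub>v x) + v \<bullet> v = 0"
    using C v(1) x by (simp add: scalar_prod_add_distrib[of v k])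
  moreover have "v \<bullet> (C *\<^sub>v x) = x \<bullet> x"
    using transpose_vec_mult_scalar[OF C x v(1)] unfolding x_def by simp
  ultimately have "x \<bullet>c x + v \<bullet>c v = 0" by simp
  then have "v \<bullet>c v = 0"
    using conjugate_square_ge_0_vec[of x] conjugate_square_ge_0_vec[of v] by linarith
  then show False using conjugate_square_eq_0_vec[OF v(1)] v(2) by simp
qed

lemma mat_inverse_SomeE:
  fixes A :: "real mat"
  assumes A: "A \<in> carrier_mat k k" and "det A \<noteq> 0"
  obtains B where "mat_inverse A = Some B" "A * B = 1\<^sub>m k" "B * A = 1\<^sub>m k" "B \<in> carrier_mat k k"
proof -
  have "A \<in> Units (ring_mat TYPE(real) k ())"
    by (rule det_non_zero_imp_unit[OF assms])
  then have "mat_inverse A \<noteq> None"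
    using mat_inverse(1)[OF A, of "()"] by blast
  then obtain B where B: "mat_inverse A = Some B" by blast
  show thesis using that[OF B] mat_inverse(2)[OF A B] by blast
qed

lemma all_ones_mat_carrier [simp]: "all_ones_mat a b \<in> carrier_mat a b"
  unfolding all_ones_mat_def by simp

lemma dim_row_all_ones_mat [simp]: "dim_row (all_ones_mat a b) = a"
  and dim_col_all_ones_mat [simp]: "dim_col (all_ones_mat a b) = b"
  unfolding all_ones_mat_def by simp_all

lemma transpose_all_ones_mat [simp]: "transpose_mat (all_ones_mat a b) = all_ones_mat b a"
  unfolding all_ones_mat_def by (rule eq_matI) auto

lemma all_ones_mat_mult: "all_ones_mat a b * all_ones_mat b c = real b \<cdot>\<^sub>m all_ones_mat a c"
  unfolding all_ones_mat_def by (rule eq_matI) (auto simp: scalar_prod_def)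

lemma outer_all_ones_mat: "all_ones_mat a 1 * all_ones_mat 1 c = all_ones_mat a c"
  unfolding all_ones_mat_def by (rule eq_matI) (auto simp: scalar_prod_def)

lemma sum_reflect_mod:
  fixes j k :: nat
  assumes "j < k"
  shows "(\<Sum>i<k. c ((j + k - i) mod k)) = (\<Sum>t<k. c t)"
proof -
  have mod_eq: "(j + k - i) mod k = (if i \<le> j then j - i else j + k - i)" if "i < k" for i
  proof (cases "i \<le> j")
    case True
    then have "j + k - i = (j - i) + k" by simp
    then have "(j + k - i) mod k = (j - i) mod k" by (simp only: mod_add_self2)
    then show ?thesis using True assms by simp
  next
    case False
    then show ?thesis using that by simp
  qed
  define \<sigma> where "\<sigma> t = (j + k - t) mod k" for t
  have \<sigma>_less: "\<sigma> t < k" for t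
    unfolding \<sigma>_def using assms by simp
  have \<sigma>_involutive: "\<sigma> (\<sigma> i) = i" if "i < k" for i
    unfolding \<sigma>_def using that assms by (auto simp: mod_eq)
  have "(\<Sum>i<k. c (\<sigma> i)) = (\<Sum>t<k. c t)"
    by (rule sum.reindex_bij_witness[where i = \<sigma> and j = \<sigma>])
      (simp_all add: \<sigma>_less \<sigma>_involutive)
  then show ?thesis by (simp only: \<sigma>_def)
qed

lemma all_ones_mult_circ_mat:
  "all_ones_mat 1 k * circ_mat k c = (\<Sum>t<k. c t) \<cdot>\<^sub>m all_ones_mat 1 k"
  unfolding all_ones_mat_def circ_mat_def
  by (rule eq_matI) (auto simp: scalar_prod_def atLeast0LessThan sum_reflect_mod)

lemma wheel_C_carrier: "wheel_C n \<in> carrier_mat (n - 1) (n - 1)"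
  unfolding wheel_C_def circ_mat_def by simp

lemma all_ones_mult_wheel_C:
  assumes "n \<ge> 3"
  shows "all_ones_mat 1 (n - 1) * wheel_C n = 0\<^sub>m 1 (n - 1)"
proof -
  have "(\<Sum>t<n - 1. if t = 0 then 1 else if t = n - 2 then -1 else 0)
      = (\<Sum>t<n - 1. (if t = 0 then 1 else 0) - (if t = n - 2 then 1 else (0::real)))"
    using assms by (intro sum.cong) auto
  also have "\<dots> = 0"
    using assms by (simp add: sum_subtractf)
  finally show ?thesis
    unfolding wheel_C_def all_ones_mult_circ_mat by (intro eq_matI) (auto simp: all_ones_mat_def)
qed

(* N is the incidence matrix of the cone over a graph with incidence matrix C (the wheel is the
   cone over the cycle); of C only squareness and zero column sums are used. *)
locale cone_incidence =
  fixes n :: nat and C P :: "real mat"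
  assumes n_pos: "0 < n"
    and C_carrier [simp]: "C \<in> carrier_mat (n - 1) (n - 1)"
    and P_carrier [simp]: "P \<in> carrier_mat (n - 1) (n - 1)"
    and ones_mult_C: "all_ones_mat 1 (n - 1) * C = 0\<^sub>m 1 (n - 1)"
    and P_mult_M: "P * (C * transpose_mat C + 1\<^sub>m (n - 1)) = 1\<^sub>m (n - 1)"
    and M_mult_P: "(C * transpose_mat C + 1\<^sub>m (n - 1)) * P = 1\<^sub>m (n - 1)"
begin

abbreviation m :: nat where "m \<equiv> n - 1"
abbreviation J :: "real mat" where "J \<equiv> all_ones_mat m m"
abbreviation M :: "real mat" where "M \<equiv> C * transpose_mat C + 1\<^sub>m m"
abbreviation X :: "real mat" where "X \<equiv> P * (J - real n \<cdot>\<^sub>m 1\<^sub>m m)"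
abbreviation Y :: "real mat" where "Y \<equiv> - (transpose_mat C * X)"
abbreviation N :: "real mat" where "N \<equiv> four_block_mat (all_ones_mat 1 m) (0\<^sub>m 1 m) (- 1\<^sub>m m) C"
abbreviation F :: "real mat" where "F \<equiv> four_block_mat (all_ones_mat m 1) X (0\<^sub>m m 1) Y"
abbreviation H :: "real mat" where
  "H \<equiv> four_block_mat P (- (P * C)) (- (transpose_mat C * P)) (transpose_mat C * P * C)"

lemmas dim_C_P [simp] = carrier_matD[OF C_carrier] carrier_matD[OF P_carrier]
(* With One_nat_def the simplifier would turn the dimensions 1 and n - 1 into Suc 0 and
   n - Suc 0, after which the carrier hypotheses no longer fire as rewrite rules. *)
declare carrier_matI [simp] One_nat_def [simp del]

lemma transpose_C_carrier [simp]: "transpose_mat C \<in> carrier_mat m m"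
  by simp

lemma transpose_C_mult_ones: "transpose_mat C * all_ones_mat m 1 = 0\<^sub>m m 1"
proof -
  have "transpose_mat C * all_ones_mat m 1 = transpose_mat (all_ones_mat 1 m * C)"
    using transpose_mult[OF all_ones_mat_carrier C_carrier] by simp
  then show ?thesis by (simp add: ones_mult_C)
qed

lemma J_mult_C: "J * C = 0\<^sub>m m m"
proof -
  have "J * C = all_ones_mat m 1 * all_ones_mat 1 m * C" by (simp only: outer_all_ones_mat)
  also have "\<dots> = all_ones_mat m 1 * (all_ones_mat 1 m * C)"
    by (rule assoc_mult_mat[OF all_ones_mat_carrier all_ones_mat_carrier C_carrier])
  finally show ?thesis by (simp add: ones_mult_C)
qed

lemma transpose_C_mult_J: "transpose_mat C * J = 0\<^sub>m m m"
proof -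
  have "transpose_mat C * J = transpose_mat C * (all_ones_mat m 1 * all_ones_mat 1 m)"
    by (simp only: outer_all_ones_mat)
  also have "\<dots> = transpose_mat C * all_ones_mat m 1 * all_ones_mat 1 m"
    by (rule assoc_mult_mat[OF transpose_C_carrier all_ones_mat_carrier all_ones_mat_carrier, symmetric])
  finally show ?thesis by (simp add: transpose_C_mult_ones)
qed

lemma M_carrier [simp]: "M \<in> carrier_mat m m"
  and X_carrier [simp]: "X \<in> carrier_mat m m"
  and Y_carrier [simp]: "Y \<in> carrier_mat m m"
  by simp_all

lemma transpose_P: "transpose_mat P = P"
proof -
  have "transpose_mat M = M"
    by (simp add: transpose_add[of "C * transpose_mat C" m m]
        transpose_mult[OF C_carrier transpose_C_carrier])
  then have PT_M: "transpose_mat P * M = 1\<^sub>m m"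
    using arg_cong[OF M_mult_P, of transpose_mat] by (simp add: transpose_mult[OF M_carrier P_carrier])
  have "transpose_mat P = transpose_mat P * (M * P)"
    by (simp add: M_mult_P)
  also have "\<dots> = transpose_mat P * M * P"
    by (rule assoc_mult_mat[of "transpose_mat P" m m M m P m, symmetric]) simp_all
  finally show ?thesis
    by (simp add: PT_M)
qed

lemma P_mult_ones: "P * all_ones_mat m 1 = all_ones_mat m 1"
proof -
  have "M * all_ones_mat m 1 = C * transpose_mat C * all_ones_mat m 1 + all_ones_mat m 1"
    by (simp add: add_mult_distrib_mat[OF _ one_carrier_mat all_ones_mat_carrier])
  also have "\<dots> = all_ones_mat m 1"
    by (simp add: assoc_mult_mat[OF C_carrier transpose_C_carrier all_ones_mat_carrier]
        transpose_C_mult_ones)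
  finally have M_ones: "M * all_ones_mat m 1 = all_ones_mat m 1" .
  have "P * all_ones_mat m 1 = P * (M * all_ones_mat m 1)"
    by (simp only: M_ones)
  also have "\<dots> = all_ones_mat m 1"
    by (simp add: assoc_mult_mat[OF P_carrier M_carrier all_ones_mat_carrier, symmetric] P_mult_M)
  finally show ?thesis .
qed

lemma ones_mult_P: "all_ones_mat 1 m * P = all_ones_mat 1 m"
  using arg_cong[OF P_mult_ones, of transpose_mat]
  by (simp add: transpose_mult[OF P_carrier all_ones_mat_carrier] transpose_P)

lemma P_mult_J: "P * J = J"
proof -
  have "P * J = P * all_ones_mat m 1 * all_ones_mat 1 m"
    by (simp add: assoc_mult_mat[OF P_carrier all_ones_mat_carrier all_ones_mat_carrier]
        outer_all_ones_mat)
  then show ?thesis by (simp add: P_mult_ones outer_all_ones_mat)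
qed

lemma C_mult_transpose_C_mult_P: "C * (transpose_mat C * P) = 1\<^sub>m m - P"
proof (rule eq_minus_mat_of_add_eq[of _ m m])
  have "M * P = C * transpose_mat C * P + P"
    by (simp add: add_mult_distrib_mat[OF _ one_carrier_mat P_carrier])
  then show "C * (transpose_mat C * P) + P = 1\<^sub>m m"
    using M_mult_P by (simp add: assoc_mult_mat[OF C_carrier transpose_C_carrier P_carrier])
qed simp_all

lemma X_eq: "X = J - real n \<cdot>\<^sub>m P"
proof -
  have "X = P * J - P * (real n \<cdot>\<^sub>m 1\<^sub>m m)"
    by (rule mult_minus_distrib_mat[OF P_carrier all_ones_mat_carrier]) simp
  then show ?thesis
    by (simp add: P_mult_J mult_smult_distrib[OF P_carrier one_carrier_mat])
qed

lemma Y_eq: "Y = real n \<cdot>\<^sub>m (transpose_mat C * P)"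
proof -
  have "transpose_mat C * X = transpose_mat C * J - transpose_mat C * (real n \<cdot>\<^sub>m P)"
    unfolding X_eq by (rule mult_minus_distrib_mat[OF transpose_C_carrier all_ones_mat_carrier]) simp
  also have "\<dots> = 0\<^sub>m m m - real n \<cdot>\<^sub>m (transpose_mat C * P)"
    by (simp add: transpose_C_mult_J mult_smult_distrib[OF transpose_C_carrier P_carrier])
  finally show ?thesis
    by (intro eq_matI) auto
qed

lemma real_m: "real m = real n - 1"
  using n_pos by simp

lemma N_carrier: "N \<in> carrier_mat n (m + m)"
  and F_carrier: "F \<in> carrier_mat (m + m) n"
  using n_pos by simp_all

lemma ones_mult_X: "all_ones_mat 1 m * X = - all_ones_mat 1 m"
proof -
  have "all_ones_mat 1 m * X = all_ones_mat 1 m * J - all_ones_mat 1 m * (real n \<cdot>\<^sub>m P)"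
    unfolding X_eq by (rule mult_minus_distrib_mat[OF all_ones_mat_carrier all_ones_mat_carrier]) simp
  also have "\<dots> = real m \<cdot>\<^sub>m all_ones_mat 1 m - real n \<cdot>\<^sub>m all_ones_mat 1 m"
    by (simp add: all_ones_mat_mult mult_smult_distrib[OF all_ones_mat_carrier P_carrier] ones_mult_P)
  finally show ?thesis
    by (intro eq_matI) (auto simp: all_ones_mat_def real_m)
qed

lemma C_mult_Y: "C * Y = real n \<cdot>\<^sub>m (1\<^sub>m m - P)"
  unfolding Y_eq by (simp add: mult_smult_distrib[OF C_carrier, of _ m] C_mult_transpose_C_mult_P)

(* The right-hand side is the block form of n I - J. *)
lemma N_mult_F:
  "N * F = four_block_mat (real m \<cdot>\<^sub>m 1\<^sub>m 1) (- all_ones_mat 1 m) (- all_ones_mat m 1)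
     (real n \<cdot>\<^sub>m 1\<^sub>m m - J)"
proof -
  have "N * F = four_block_mat
      (all_ones_mat 1 m * all_ones_mat m 1 + 0\<^sub>m 1 m * 0\<^sub>m m 1) (all_ones_mat 1 m * X + 0\<^sub>m 1 m * Y)
      (- 1\<^sub>m m * all_ones_mat m 1 + C * 0\<^sub>m m 1) (- 1\<^sub>m m * X + C * Y)"
    by (rule mult_four_block_mat[OF all_ones_mat_carrier zero_carrier_mat
          uminus_carrier_mat[OF one_carrier_mat] C_carrier
          all_ones_mat_carrier X_carrier zero_carrier_mat Y_carrier])
  moreover have "all_ones_mat 1 m * all_ones_mat m 1 = real m \<cdot>\<^sub>m 1\<^sub>m 1"
    unfolding all_ones_mat_mult by (intro eq_matI) (auto simp: all_ones_mat_def)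
  moreover have "all_ones_mat 1 m * X + 0\<^sub>m 1 m * Y = - all_ones_mat 1 m"
    unfolding left_mult_zero_mat[OF Y_carrier] ones_mult_X by simp
  moreover have "- 1\<^sub>m m * X + C * Y = real n \<cdot>\<^sub>m 1\<^sub>m m - J"
    unfolding C_mult_Y unfolding X_eq by (intro eq_matI) (auto simp: algebra_simps)
  ultimately show ?thesis
    by simp
qed

lemma transpose_N_mult_F: "transpose_mat (N * F) = N * F"
  unfolding N_mult_F
  by (simp add: transpose_four_block_mat[OF smult_carrier_mat[OF one_carrier_mat]
        uminus_carrier_mat[OF all_ones_mat_carrier] uminus_carrier_mat[OF all_ones_mat_carrier]
        minus_carrier_mat[OF all_ones_mat_carrier]]
      transpose_minus[of _ m m] transpose_uminus transpose_smult_mat)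

lemma N_mult_F_mult_N: "N * F * N = real n \<cdot>\<^sub>m N"
proof -
  have "N * F * N = four_block_mat
      (real m \<cdot>\<^sub>m 1\<^sub>m 1 * all_ones_mat 1 m + - all_ones_mat 1 m * - 1\<^sub>m m)
      (real m \<cdot>\<^sub>m 1\<^sub>m 1 * 0\<^sub>m 1 m + - all_ones_mat 1 m * C)
      (- all_ones_mat m 1 * all_ones_mat 1 m + (real n \<cdot>\<^sub>m 1\<^sub>m m - J) * - 1\<^sub>m m)
      (- all_ones_mat m 1 * 0\<^sub>m 1 m + (real n \<cdot>\<^sub>m 1\<^sub>m m - J) * C)"
    unfolding N_mult_F
    by (rule mult_four_block_mat[OF smult_carrier_mat[OF one_carrier_mat]
          uminus_carrier_mat[OF all_ones_mat_carrier] uminus_carrier_mat[OF all_ones_mat_carrier]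
          minus_carrier_mat[OF all_ones_mat_carrier] all_ones_mat_carrier zero_carrier_mat
          uminus_carrier_mat[OF one_carrier_mat] C_carrier])
  also have "\<dots> = four_block_mat (real n \<cdot>\<^sub>m all_ones_mat 1 m) (real n \<cdot>\<^sub>m 0\<^sub>m 1 m)
      (real n \<cdot>\<^sub>m - 1\<^sub>m m) (real n \<cdot>\<^sub>m C)"
  proof (rule cong_four_block_mat)
    show "real m \<cdot>\<^sub>m 1\<^sub>m 1 * all_ones_mat 1 m + - all_ones_mat 1 m * - 1\<^sub>m m
        = real n \<cdot>\<^sub>m all_ones_mat 1 m"
      by (intro eq_matI) (auto simp: mult_smult_assoc_mat[OF one_carrier_mat all_ones_mat_carrier] real_m algebra_simps)
    show "real m \<cdot>\<^sub>m 1\<^sub>m 1 * 0\<^sub>m 1 m + - all_ones_mat 1 m * C = real n \<cdot>\<^sub>m 0\<^sub>m 1 m"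
      by (intro eq_matI) (auto simp: ones_mult_C)
    show "- all_ones_mat m 1 * all_ones_mat 1 m + (real n \<cdot>\<^sub>m 1\<^sub>m m - J) * - 1\<^sub>m m
        = real n \<cdot>\<^sub>m - 1\<^sub>m m"
      by (intro eq_matI) (auto simp: outer_all_ones_mat)
    have "(real n \<cdot>\<^sub>m 1\<^sub>m m - J) * C = real n \<cdot>\<^sub>m C - J * C"
      by (simp add: minus_mult_distrib_mat[OF _ all_ones_mat_carrier C_carrier]
          mult_smult_assoc_mat[OF one_carrier_mat C_carrier])
    then show "- all_ones_mat m 1 * 0\<^sub>m 1 m + (real n \<cdot>\<^sub>m 1\<^sub>m m - J) * C = real n \<cdot>\<^sub>m C"
      by (intro eq_matI) (auto simp: J_mult_C)
  qed
  also have "\<dots> = real n \<cdot>\<^sub>m N"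
    by (rule smult_four_block_mat[OF all_ones_mat_carrier zero_carrier_mat
          uminus_carrier_mat[OF one_carrier_mat] C_carrier, symmetric])
  finally show ?thesis .
qed

lemma H_blocks_carrier:
  "P * C \<in> carrier_mat m m" "transpose_mat C * P \<in> carrier_mat m m"
  "transpose_mat C * P * C \<in> carrier_mat m m"
  by simp_all

lemma H_carrier: "H \<in> carrier_mat (m + m) (m + m)"
  by simp

lemma F_mult_N: "F * N = real n \<cdot>\<^sub>m H"
proof -
  have "F * N = four_block_mat
      (all_ones_mat m 1 * all_ones_mat 1 m + X * - 1\<^sub>m m) (all_ones_mat m 1 * 0\<^sub>m 1 m + X * C)
      (0\<^sub>m m 1 * all_ones_mat 1 m + Y * - 1\<^sub>m m) (0\<^sub>m m 1 * 0\<^sub>m 1 m + Y * C)"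
    by (rule mult_four_block_mat[OF all_ones_mat_carrier X_carrier zero_carrier_mat Y_carrier
          all_ones_mat_carrier zero_carrier_mat uminus_carrier_mat[OF one_carrier_mat] C_carrier])
  also have "\<dots> = four_block_mat (real n \<cdot>\<^sub>m P) (real n \<cdot>\<^sub>m - (P * C))
      (real n \<cdot>\<^sub>m - (transpose_mat C * P)) (real n \<cdot>\<^sub>m (transpose_mat C * P * C))"
  proof (rule cong_four_block_mat)
    show "all_ones_mat m 1 * all_ones_mat 1 m + X * - 1\<^sub>m m = real n \<cdot>\<^sub>m P"
      unfolding X_eq by (intro eq_matI) (auto simp: outer_all_ones_mat)
    have "X * C = 0\<^sub>m m m - real n \<cdot>\<^sub>m (P * C)"
      unfolding X_eq
      by (simp add: minus_mult_distrib_mat[OF all_ones_mat_carrier _ C_carrier]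
          mult_smult_assoc_mat[OF P_carrier C_carrier] J_mult_C)
    then show "all_ones_mat m 1 * 0\<^sub>m 1 m + X * C = real n \<cdot>\<^sub>m - (P * C)"
      by (intro eq_matI) auto
    show "0\<^sub>m m 1 * all_ones_mat 1 m + Y * - 1\<^sub>m m = real n \<cdot>\<^sub>m - (transpose_mat C * P)"
      unfolding Y_eq by (intro eq_matI) auto
    show "0\<^sub>m m 1 * 0\<^sub>m 1 m + Y * C = real n \<cdot>\<^sub>m (transpose_mat C * P * C)"
      unfolding Y_eq by (simp add: mult_smult_assoc_mat[OF H_blocks_carrier(2) C_carrier])
  qed
  also have "\<dots> = real n \<cdot>\<^sub>m H"
    by (rule smult_four_block_mat[OF P_carrier uminus_carrier_mat[OF H_blocks_carrier(1)]
          uminus_carrier_mat[OF H_blocks_carrier(2)] H_blocks_carrier(3), symmetric])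
  finally show ?thesis .
qed

lemma transpose_H: "transpose_mat H = H"
  unfolding transpose_four_block_mat[OF P_carrier uminus_carrier_mat[OF H_blocks_carrier(1)]
      uminus_carrier_mat[OF H_blocks_carrier(2)] H_blocks_carrier(3)]
  by (simp add: transpose_uminus transpose_mult[of _ m m _ m] transpose_P assoc_mult_mat[of _ m m _ m _ m])

lemma P_mult_X_minus_P_mult_C_mult_Y: "P * X - P * C * Y = X"
proof -
  have "P * X = J - real n \<cdot>\<^sub>m (P * P)"
    unfolding X_eq
    by (simp add: mult_minus_distrib_mat[OF P_carrier all_ones_mat_carrier smult_carrier_mat[OF P_carrier]]
        P_mult_J mult_smult_distrib[OF P_carrier P_carrier])
  moreover have "P * C * Y = real n \<cdot>\<^sub>m (P - P * P)"
  proof -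
    have "P * C * Y = real n \<cdot>\<^sub>m (P * (C * (transpose_mat C * P)))"
      unfolding Y_eq
      by (simp add: mult_smult_distrib[OF H_blocks_carrier(1,2)]
          assoc_mult_mat[OF P_carrier C_carrier H_blocks_carrier(2)])
    then show ?thesis
      by (simp add: C_mult_transpose_C_mult_P mult_minus_distrib_mat[OF P_carrier one_carrier_mat P_carrier])
  qed
  ultimately show ?thesis
    unfolding X_eq by (intro eq_matI) (auto simp: algebra_simps)
qed

lemma H_mult_F: "H * F = F"
proof -
  have "H * F = four_block_mat
      (P * all_ones_mat m 1 + - (P * C) * 0\<^sub>m m 1) (P * X + - (P * C) * Y)
      (- (transpose_mat C * P) * all_ones_mat m 1 + transpose_mat C * P * C * 0\<^sub>m m 1)
      (- (transpose_mat C * P) * X + transpose_mat C * P * C * Y)"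
    by (rule mult_four_block_mat[OF P_carrier uminus_carrier_mat[OF H_blocks_carrier(1)]
          uminus_carrier_mat[OF H_blocks_carrier(2)] H_blocks_carrier(3)
          all_ones_mat_carrier X_carrier zero_carrier_mat Y_carrier])
  also have "\<dots> = F"
  proof (rule cong_four_block_mat)
    show "P * all_ones_mat m 1 + - (P * C) * 0\<^sub>m m 1 = all_ones_mat m 1"
      by (simp add: P_mult_ones)
    have "P * X + - (P * C) * Y = P * X - P * C * Y"
      by (intro eq_matI) auto
    then show "P * X + - (P * C) * Y = X"
      unfolding P_mult_X_minus_P_mult_C_mult_Y .
    have "transpose_mat C * P * all_ones_mat m 1 = 0\<^sub>m m 1"
      by (simp add: assoc_mult_mat[OF transpose_C_carrier P_carrier all_ones_mat_carrier]
          P_mult_ones transpose_C_mult_ones)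
    then show "- (transpose_mat C * P) * all_ones_mat m 1 + transpose_mat C * P * C * 0\<^sub>m m 1
        = 0\<^sub>m m 1"
      by (intro eq_matI) auto
    have "transpose_mat C * P * X - transpose_mat C * P * C * Y
        = transpose_mat C * (P * X - P * C * Y)"
      by (simp add: mult_minus_distrib_mat[of _ m m _ m] assoc_mult_mat[of _ m m _ m _ m])
    also have "\<dots> = transpose_mat C * X"
      by (simp only: P_mult_X_minus_P_mult_C_mult_Y)
    moreover have "- (transpose_mat C * P) * X + transpose_mat C * P * C * Y
        = - (transpose_mat C * P * X - transpose_mat C * P * C * Y)"
      by (intro eq_matI) auto
    ultimately show "- (transpose_mat C * P) * X + transpose_mat C * P * C * Y = Y"
      by simp
  qed
  finally show ?thesis .
qed

theorem is_moore_penrose_inverse_N: "is_moore_penrose_inverse N ((1 / real n) \<cdot>\<^sub>m F)"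
proof (rule is_moore_penrose_inverse_smultI)
  show "F \<in> carrier_mat (dim_col N) (dim_row N)"
    using N_carrier F_carrier by simp
  show "real n \<noteq> 0"
    using n_pos by simp
  show "F * N * F = real n \<cdot>\<^sub>m F"
    unfolding F_mult_N mult_smult_assoc_mat[OF H_carrier F_carrier] H_mult_F ..
  show "transpose_mat (F * N) = F * N"
    unfolding F_mult_N transpose_smult_mat transpose_H ..
qed (fact N_mult_F_mult_N transpose_N_mult_F)+

end

theorem mainTheorem6:
  fixes n :: nat
  assumes "n \<ge> 4"
  defines "C \<equiv> wheel_C n"
  defines "M \<equiv> C * transpose_mat C + 1\<^sub>m (n - 1)"
  defines "X \<equiv> the (mat_inverse M) * (all_ones_mat (n - 1) (n - 1) - of_nat n \<cdot>\<^sub>m 1\<^sub>m (n - 1))"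
  defines "Y \<equiv> - (transpose_mat C * X)"
  shows "invertible_mat M \<and>
         is_moore_penrose_inverse (wheel_N n)
           ((1 / of_nat n) \<cdot>\<^sub>m four_block_mat
              (all_ones_mat (n - 1) 1) X
              (0\<^sub>m (n - 1) 1) Y)"
proof -
  have C: "C \<in> carrier_mat (n - 1) (n - 1)"
    unfolding C_def by (rule wheel_C_carrier)
  then have M: "M \<in> carrier_mat (n - 1) (n - 1)"
    unfolding M_def by simp
  have "det M \<noteq> 0"
    unfolding M_def using C by (rule det_mult_transpose_add_one_neq_0)
  then obtain P where P: "mat_inverse M = Some P" and MP: "M * P = 1\<^sub>m (n - 1)"
    and PM: "P * M = 1\<^sub>m (n - 1)" and P_carrier: "P \<in> carrier_mat (n - 1) (n - 1)"
    by (rule mat_inverse_SomeE[OF M])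
  have "invertible_mat M"
    unfolding invertible_mat_def inverts_mat_def using M P_carrier MP PM by auto
  moreover have "cone_incidence n C P"
    using assms(1) C P_carrier MP PM all_ones_mult_wheel_C[of n]
    unfolding cone_incidence_def M_def C_def by simp
  moreover have
    "wheel_N n = four_block_mat (all_ones_mat 1 (n - 1)) (0\<^sub>m 1 (n - 1)) (- 1\<^sub>m (n - 1)) C"
    unfolding wheel_N_def C_def all_ones_mat_def ..
  ultimately show ?thesis
    using cone_incidence.is_moore_penrose_inverse_N unfolding X_def Y_def P by simp
qed

end
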